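(* Let $A$ be a sub-tree of $T$, let $S_1,S_2\subseteq V_A$ and let $x\in[0,d(r_A)]$. Then $$G(S_1,x)+G(S_2,x)\le G(S_1\cup S_2,x)+G(S_1\cap S_2,x).$$
   Context: Setting. $T$ is a finite tree rooted at $r_T$, node set $V_T$; every edge $e$ has weight $w_e\ge 0$. Every node $v$ has a probability $\pi_v\in(0,1]$ and a prize $p_v\in\mathbb{R}$. $d(v)$ is the total weight of the path from $r_T$ to $v$. A random set $\omega\subseteq V_T$ contains each node $v$ independently with probability $\pi_v$. For $S\subseteq V_T$, $P(S)=1-\prod_{s\in S}(1-\pi_s)$ ($P(\emptyset)=0$). For a node $a$, the sub-tree $A$ rooted at $r_A=a$ consists of $a$ and all its descendants, with node set $V_A$. For $Q\subseteq V_T$, $W(Q)$ is the total weight of the edges lying on at least one path from $r_T$ to a node of $Q$. For $S\subseteq V_A$ and $x\le d(r_A)$ the expected profit is $G(S,x)=\sum_{s\in S}p_s\pi_s-\mathbb{E}[W(S\cap\omega)]+x\,P(S)$. *)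

theory Defs
  imports Main "HOL-Library.FuncSet" Complex_Main
begin

text \<open>The edge between par v and v
(for v a non-root node) is identified with its child endpoint v; its weight is w v.\<close>

definition rooted_tree :: "'a set \<Rightarrow> 'a \<Rightarrow> ('a \<Rightarrow> 'a) \<Rightarrow> bool" where
  "rooted_tree V r par \<longleftrightarrow> finite V \<and> r \<in> V \<and>
     (\<forall>v\<in>V. v \<noteq> r \<longrightarrow> par v \<in> V) \<and>
     (\<forall>v\<in>V. \<exists>n. (par ^^ n) v = r)"

definition path_nodes :: "'a \<Rightarrow> ('a \<Rightarrow> 'a) \<Rightarrow> 'a \<Rightarrow> 'a set" where
  "path_nodes r par v = {u. \<exists>k. (par ^^ k) v = u \<and> (\<forall>j<k. (par ^^ j) v \<noteq> r)}"

definition path_edges :: "'a \<Rightarrow> ('a \<Rightarrow> 'a) \<Rightarrow> 'a \<Rightarrow> 'a set" where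
  "path_edges r par v = path_nodes r par v - {r}"

definition depth :: "'a \<Rightarrow> ('a \<Rightarrow> 'a) \<Rightarrow> ('a \<Rightarrow> real) \<Rightarrow> 'a \<Rightarrow> real" where
  "depth r par w v = (\<Sum>e\<in>path_edges r par v. w e)"

definition Wt :: "'a \<Rightarrow> ('a \<Rightarrow> 'a) \<Rightarrow> ('a \<Rightarrow> real) \<Rightarrow> 'a set \<Rightarrow> real" where
  "Wt r par w Q = (\<Sum>e\<in>(\<Union>q\<in>Q. path_edges r par q). w e)"

definition subtree_nodes :: "'a set \<Rightarrow> 'a \<Rightarrow> ('a \<Rightarrow> 'a) \<Rightarrow> 'a \<Rightarrow> 'a set" where
  "subtree_nodes V r par a = {v\<in>V. a \<in> path_nodes r par v}"

text \<open>Probability of the outcome \<omega> (a subset of V) when each node v is included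
independently with probability \<pi> v.\<close>
definition omega_prob :: "'a set \<Rightarrow> ('a \<Rightarrow> real) \<Rightarrow> 'a set \<Rightarrow> real" where
  "omega_prob V \<pi> \<omega> = (\<Prod>v\<in>\<omega>. \<pi> v) * (\<Prod>v\<in>V - \<omega>. 1 - \<pi> v)"

definition Pr :: "('a \<Rightarrow> real) \<Rightarrow> 'a set \<Rightarrow> real" where
  "Pr \<pi> S = 1 - (\<Prod>s\<in>S. 1 - \<pi> s)"

definition EW :: "'a set \<Rightarrow> 'a \<Rightarrow> ('a \<Rightarrow> 'a) \<Rightarrow> ('a \<Rightarrow> real) \<Rightarrow> ('a \<Rightarrow> real) \<Rightarrow> 'a set \<Rightarrow> real" where
  "EW V r par w \<pi> S = (\<Sum>\<omega>\<in>Pow V. omega_prob V \<pi> \<omega> * Wt r par w (S \<inter> \<omega>))"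

definition G :: "'a set \<Rightarrow> 'a \<Rightarrow> ('a \<Rightarrow> 'a) \<Rightarrow> ('a \<Rightarrow> real) \<Rightarrow> ('a \<Rightarrow> real) \<Rightarrow> ('a \<Rightarrow> real)
    \<Rightarrow> 'a set \<Rightarrow> real \<Rightarrow> real" where
  "G V r par w \<pi> p S x = (\<Sum>s\<in>S. p s * \<pi> s) - EW V r par w \<pi> S + x * Pr \<pi> S"

end

theory Submission
  imports Defs
begin

text \<open>By linearity of expectation, E[W(S \<inter> \<omega>)] is the sum over the edges e of w e times the
probability that \<omega> meets the set of nodes of S lying below e. For S inside the sub-tree A every
edge on the path from the root to r_A lies above all of S, so these edges contribute
d(r_A) P(S), and G(S,x) becomes a modular term minus (d(r_A) - x) P(S) minus a nonnegative
combination of P on the sets of nodes below the remaining edges. Since 1 - P(S) is a product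
over S, the function P is submodular, and for x \<le> d(r_A) the inequality follows.\<close>

lemma sum_omega_prob_eq_1:
  fixes \<pi> :: "'a \<Rightarrow> real"
  assumes "finite V"
  shows "(\<Sum>\<omega>\<in>Pow V. omega_prob V \<pi> \<omega>) = 1"
  using prod_add[OF assms, of \<pi> "\<lambda>v. 1 - \<pi> v"] by (simp add: omega_prob_def)

lemma sum_omega_prob_disjoint:
  fixes \<pi> :: "'a \<Rightarrow> real"
  assumes fin: "finite V" and BV: "B \<subseteq> V"
  shows "(\<Sum>\<omega>\<in>Pow V. if B \<inter> \<omega> = {} then omega_prob V \<pi> \<omega> else 0) = (\<Prod>b\<in>B. 1 - \<pi> b)"
proof -
  have split: "omega_prob V \<pi> \<omega> = omega_prob (V - B) \<pi> \<omega> * (\<Prod>b\<in>B. 1 - \<pi> b)"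
    if "\<omega> \<in> Pow (V - B)" for \<omega>
  proof -
    have "V - \<omega> = ((V - B) - \<omega>) \<union> B" "((V - B) - \<omega>) \<inter> B = {}" using that BV by auto
    then show ?thesis
      using fin BV by (simp add: omega_prob_def prod.union_disjoint finite_subset)
  qed
  have "(\<Sum>\<omega>\<in>Pow V. if B \<inter> \<omega> = {} then omega_prob V \<pi> \<omega> else 0)
      = (\<Sum>\<omega>\<in>Pow (V - B). omega_prob V \<pi> \<omega>)"
    by (rule sum.mono_neutral_cong_right) (use fin in auto)
  also have "\<dots> = (\<Sum>\<omega>\<in>Pow (V - B). omega_prob (V - B) \<pi> \<omega>) * (\<Prod>b\<in>B. 1 - \<pi> b)"
    by (simp add: split sum_distrib_right)
  also have "\<dots> = (\<Prod>b\<in>B. 1 - \<pi> b)"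
    using fin by (simp add: sum_omega_prob_eq_1)
  finally show ?thesis .
qed

lemma sum_omega_prob_meets:
  fixes \<pi> :: "'a \<Rightarrow> real"
  assumes "finite V" and "B \<subseteq> V"
  shows "(\<Sum>\<omega>\<in>Pow V. if B \<inter> \<omega> \<noteq> {} then omega_prob V \<pi> \<omega> else 0) = Pr \<pi> B"
proof -
  have "(\<Sum>\<omega>\<in>Pow V. if B \<inter> \<omega> \<noteq> {} then omega_prob V \<pi> \<omega> else 0)
      = (\<Sum>\<omega>\<in>Pow V. omega_prob V \<pi> \<omega>)
        - (\<Sum>\<omega>\<in>Pow V. if B \<inter> \<omega> = {} then omega_prob V \<pi> \<omega> else 0)"
    unfolding sum_subtractf[symmetric] by (rule sum.cong) auto
  then show ?thesis
    using assms by (simp add: sum_omega_prob_eq_1 sum_omega_prob_disjoint Pr_def)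
qed

lemma Pr_submodular:
  fixes \<pi> :: "'a \<Rightarrow> real"
  assumes fin: "finite A" "finite B" and \<pi>: "\<forall>v\<in>A \<union> B. 0 \<le> \<pi> v \<and> \<pi> v \<le> 1"
  shows "Pr \<pi> (A \<union> B) + Pr \<pi> (A \<inter> B) \<le> Pr \<pi> A + Pr \<pi> B"
proof -
  define f where "f v = 1 - \<pi> v" for v
  define c where "c = prod f (A \<inter> B)"
  define s where "s = prod f (A - B)"
  define t where "t = prod f (B - A)"
  have A: "prod f A = c * s"
    unfolding c_def s_def using prod.Int_Diff[OF fin(1)] .
  have B: "prod f B = c * t"
    unfolding c_def t_def using prod.Int_Diff[OF fin(2), of f A] by (simp add: Int_commute)
  have "prod f (A \<union> B) = prod f A * prod f (B - A)"
    using fin prod.union_disjoint[of A "B - A" f] by (simp add: Un_Diff_cancel)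
  then have AB: "prod f (A \<union> B) = c * s * t"
    using A by (simp add: t_def)
  have f01: "0 \<le> prod f X \<and> prod f X \<le> 1" if "X \<subseteq> A \<union> B" for X
    using \<pi> that unfolding f_def by (auto intro!: prod_nonneg prod_le_1)
  have "0 \<le> c" "0 \<le> 1 - s" "0 \<le> 1 - t"
    using f01[of "A \<inter> B"] f01[of "A - B"] f01[of "B - A"] unfolding c_def s_def t_def by auto
  then have "0 \<le> c * (1 - s) * (1 - t)" by simp
  moreover have Pr_eq: "Pr \<pi> X = 1 - prod f X" for X
    unfolding Pr_def f_def ..
  ultimately show ?thesis
    unfolding Pr_eq A B AB c_def by (simp add: algebra_simps)
qed

definition nodes_below_edge :: "'a \<Rightarrow> ('a \<Rightarrow> 'a) \<Rightarrow> 'a set \<Rightarrow> 'a \<Rightarrow> 'a set" where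
  "nodes_below_edge r par S e = {q\<in>S. e \<in> path_edges r par q}"

lemma EW_eq_sum_edges:
  assumes fin: "finite V" and SV: "S \<subseteq> V" and finE: "finite E"
    and paths: "\<And>q. q \<in> S \<Longrightarrow> path_edges r par q \<subseteq> E"
  shows "EW V r par w \<pi> S = (\<Sum>e\<in>E. w e * Pr \<pi> (nodes_below_edge r par S e))"
proof -
  let ?N = "nodes_below_edge r par S"
  have Wt_eq: "Wt r par w (S \<inter> \<omega>) = (\<Sum>e\<in>E. if ?N e \<inter> \<omega> \<noteq> {} then w e else 0)" for \<omega>
  proof -
    have "(\<Union>q\<in>S \<inter> \<omega>. path_edges r par q) = {e\<in>E. ?N e \<inter> \<omega> \<noteq> {}}"
      using paths unfolding nodes_below_edge_def by blast
    then show ?thesis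
      unfolding Wt_def using finE by (simp add: sum.inter_filter)
  qed
  have "EW V r par w \<pi> S
      = (\<Sum>e\<in>E. w e * (\<Sum>\<omega>\<in>Pow V. if ?N e \<inter> \<omega> \<noteq> {} then omega_prob V \<pi> \<omega> else 0))"
    unfolding EW_def Wt_eq sum_distrib_left
    by (subst sum.swap) (simp add: if_distrib mult.commute cong: if_cong)
  also have "\<dots> = (\<Sum>e\<in>E. w e * Pr \<pi> (?N e))"
    using SV by (intro sum.cong refl arg_cong2[where f = times] sum_omega_prob_meets[OF fin])
      (auto simp: nodes_below_edge_def)
  finally show ?thesis .
qed

lemma weighted_Pr_nodes_below_edge_submodular:
  assumes fin: "finite S1" "finite S2" and finE: "finite E"
    and w: "\<forall>e\<in>E. 0 \<le> w e" and \<pi>: "\<forall>v\<in>S1 \<union> S2. 0 \<le> \<pi> v \<and> \<pi> v \<le> 1"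
  shows "(\<Sum>e\<in>E. w e * Pr \<pi> (nodes_below_edge r par (S1 \<union> S2) e))
           + (\<Sum>e\<in>E. w e * Pr \<pi> (nodes_below_edge r par (S1 \<inter> S2) e))
         \<le> (\<Sum>e\<in>E. w e * Pr \<pi> (nodes_below_edge r par S1 e))
           + (\<Sum>e\<in>E. w e * Pr \<pi> (nodes_below_edge r par S2 e))"
proof -
  have "w e * (Pr \<pi> (nodes_below_edge r par (S1 \<union> S2) e) + Pr \<pi> (nodes_below_edge r par (S1 \<inter> S2) e))
      \<le> w e * (Pr \<pi> (nodes_below_edge r par S1 e) + Pr \<pi> (nodes_below_edge r par S2 e))"
    if "e \<in> E" for e
  proof (rule mult_left_mono)
    have "nodes_below_edge r par (S1 \<union> S2) e
            = nodes_below_edge r par S1 e \<union> nodes_below_edge r par S2 e"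
      "nodes_below_edge r par (S1 \<inter> S2) e
            = nodes_below_edge r par S1 e \<inter> nodes_below_edge r par S2 e"
      unfolding nodes_below_edge_def by auto
    then show "Pr \<pi> (nodes_below_edge r par (S1 \<union> S2) e) + Pr \<pi> (nodes_below_edge r par (S1 \<inter> S2) e)
        \<le> Pr \<pi> (nodes_below_edge r par S1 e) + Pr \<pi> (nodes_below_edge r par S2 e)"
      using fin \<pi> by (auto intro!: Pr_submodular simp: nodes_below_edge_def)
  qed (use w that in auto)
  then show ?thesis
    by (simp add: sum.distrib[symmetric] distrib_left sum_mono)
qed

lemma path_nodes_subset:
  assumes tree: "rooted_tree V r par" and q: "q \<in> V"
  shows "path_nodes r par q \<subseteq> V"
proof -
  have "(par ^^ k) q \<in> V" if "\<forall>j<k. (par ^^ j) q \<noteq> r" for k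
    using that
  proof (induction k)
    case 0
    then show ?case using q by simp
  next
    case (Suc k)
    then have "(par ^^ k) q \<in> V" "(par ^^ k) q \<noteq> r" by auto
    then show ?case using tree unfolding rooted_tree_def by auto
  qed
  then show ?thesis unfolding path_nodes_def by blast
qed

lemma path_edges_mono:
  assumes "a \<in> path_nodes r par q"
  shows "path_edges r par a \<subseteq> path_edges r par q"
proof
  fix e assume "e \<in> path_edges r par a"
  then obtain j where j: "(par ^^ j) a = e" "\<forall>i<j. (par ^^ i) a \<noteq> r" "e \<noteq> r"
    unfolding path_edges_def path_nodes_def by auto
  obtain k where k: "(par ^^ k) q = a" "\<forall>i<k. (par ^^ i) q \<noteq> r"
    using assms unfolding path_nodes_def by auto
  have shift: "(par ^^ i) q = (par ^^ (i - k)) a" if "k \<le> i" for i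
    using k(1) that funpow_add[of "i - k" k par] by simp
  have "(par ^^ (j + k)) q = e"
    using shift[of "j + k"] j by simp
  moreover have "(par ^^ i) q \<noteq> r" if "i < j + k" for i
    using that k(2) j(2) shift[of i] by (cases "i < k") auto
  ultimately show "e \<in> path_edges r par q"
    using j(3) unfolding path_edges_def path_nodes_def by auto
qed

lemma G_subtree_eq:
  assumes tree: "rooted_tree V r par" and a: "a \<in> V" and S: "S \<subseteq> subtree_nodes V r par a"
  shows "G V r par w \<pi> p S x
           = (\<Sum>s\<in>S. p s * \<pi> s) - (depth r par w a - x) * Pr \<pi> S
             - (\<Sum>e\<in>(V - {r}) - path_edges r par a. w e * Pr \<pi> (nodes_below_edge r par S e))"
proof -
  let ?E = "V - {r}" and ?P = "path_edges r par a"
  let ?term = "\<lambda>e. w e * Pr \<pi> (nodes_below_edge r par S e)"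
  have fin: "finite V" using tree unfolding rooted_tree_def by auto
  have paths: "path_edges r par q \<subseteq> ?E" if "q \<in> V" for q
    using path_nodes_subset[OF tree that] unfolding path_edges_def by auto
  have SV: "S \<subseteq> V" using S unfolding subtree_nodes_def by auto
  have edge_above: "nodes_below_edge r par S e = S" if "e \<in> ?P" for e
    using S that path_edges_mono[of a r par]
    unfolding nodes_below_edge_def subtree_nodes_def by auto
  have "EW V r par w \<pi> S = (\<Sum>e\<in>?E. ?term e)"
    using SV paths fin by (intro EW_eq_sum_edges) auto
  also have "\<dots> = (\<Sum>e\<in>?P. ?term e) + (\<Sum>e\<in>?E - ?P. ?term e)"
    using paths[OF a] fin by (simp add: sum.subset_diff add.commute)
  also have "(\<Sum>e\<in>?P. ?term e) = depth r par w a * Pr \<pi> S"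
    by (simp add: edge_above depth_def sum_distrib_right)
  finally show ?thesis
    unfolding G_def by (simp add: algebra_simps)
qed

theorem proposition2:
  fixes V :: "'a set" and r :: 'a and par :: "'a \<Rightarrow> 'a"
    and w \<pi> p :: "'a \<Rightarrow> real" and a :: 'a and S1 S2 :: "'a set" and x :: real
  assumes tree: "rooted_tree V r par"
    and w_nonneg: "\<forall>v\<in>V - {r}. w v \<ge> 0"
    and pi_range: "\<forall>v\<in>V. 0 < \<pi> v \<and> \<pi> v \<le> 1"
    and a_in: "a \<in> V"
    and S1: "S1 \<subseteq> subtree_nodes V r par a"
    and S2: "S2 \<subseteq> subtree_nodes V r par a"
    and x_range: "0 \<le> x" "x \<le> depth r par w a"
  shows "G V r par w \<pi> p S1 x + G V r par w \<pi> p S2 x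
           \<le> G V r par w \<pi> p (S1 \<union> S2) x + G V r par w \<pi> p (S1 \<inter> S2) x"
proof -
  have fin: "finite V" using tree unfolding rooted_tree_def by auto
  have SV: "S1 \<subseteq> V" "S2 \<subseteq> V" using S1 S2 unfolding subtree_nodes_def by auto
  then have finS: "finite S1" "finite S2" using fin finite_subset by auto
  have \<pi>: "\<forall>v\<in>S1 \<union> S2. 0 \<le> \<pi> v \<and> \<pi> v \<le> 1" using pi_range SV by force
  have modular: "(\<Sum>s\<in>S1 \<union> S2. p s * \<pi> s) + (\<Sum>s\<in>S1 \<inter> S2. p s * \<pi> s)
      = (\<Sum>s\<in>S1. p s * \<pi> s) + (\<Sum>s\<in>S2. p s * \<pi> s)"
    using finS by (rule sum.union_inter)
  have root_path: "(depth r par w a - x) * (Pr \<pi> (S1 \<union> S2) + Pr \<pi> (S1 \<inter> S2))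
      \<le> (depth r par w a - x) * (Pr \<pi> S1 + Pr \<pi> S2)"
    using Pr_submodular[OF finS \<pi>] x_range by (intro mult_left_mono) auto
  note other_edges = weighted_Pr_nodes_below_edge_submodular[OF finS _ _ \<pi>,
      of "(V - {r}) - path_edges r par a" w r par]
  have S12: "S1 \<union> S2 \<subseteq> subtree_nodes V r par a" "S1 \<inter> S2 \<subseteq> subtree_nodes V r par a"
    using S1 S2 by auto
  show ?thesis
    unfolding G_subtree_eq[OF tree a_in S1] G_subtree_eq[OF tree a_in S2]
      G_subtree_eq[OF tree a_in S12(1)] G_subtree_eq[OF tree a_in S12(2)]
    using modular root_path other_edges fin w_nonneg by (simp add: algebra_simps)
qed

end
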